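(* Let $D\subset\mathbb{R}^n$ be a domain. For $z\in D$ let $\tau_D(Z)$ be the first exit time from $D$ of iterated Brownian motion $Z$ started at $z$, and $\tau_D(Z^1)$ the first exit time from $D$ of Brownian-time Brownian motion $Z^1$ started at $z$. Then for all $z\in D$ and all $t>0$, $$P_z[\tau_D(Z)>t]\le 2\,P_z[\tau_D(Z^1)>t].$$
   Context: Iterated Brownian motion started at $z$: with $X^+,X^-$ independent $n$-dimensional Brownian motions started at $0$ and $Y$ an independent one-dimensional Brownian motion started at $0$, set $X_t=X^+_t$ for $t\ge0$, $X_t=X^-_{-t}$ for $t<0$, and $Z_t=z+X(Y_t)$. Brownian-time Brownian motion started at $z$: with $X$ an $n$-dimensional Brownian motion started at $0$ and $Y$ an independent one-dimensional Brownian motion started at $0$, $Z^1_t=z+X(|Y_t|)$. For a process $W$, $\tau_D(W)=\inf\{t\ge0: W_t\notin D\}$. *)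

theory Defs
  imports "HOL-Probability.Probability"
begin

text \<open>Processes are maps W :: omega => real => value; only times t >= 0 matter.
  The path space on the time set [0,oo) with the product sigma-algebra.\<close>

definition path_space :: "(real \<Rightarrow> 'b::topological_space) measure" where
  "path_space = Pi\<^sub>M {0..} (\<lambda>_. borel)"

definition path_of :: "('w \<Rightarrow> real \<Rightarrow> 'b) \<Rightarrow> 'w \<Rightarrow> real \<Rightarrow> 'b" where
  "path_of W \<omega> = restrict (W \<omega>) {0..}"

definition std_BM :: "'w measure \<Rightarrow> ('w \<Rightarrow> real \<Rightarrow> real) \<Rightarrow> bool" where
  "std_BM M B \<longleftrightarrow> prob_space M \<and>
     (\<forall>t\<ge>0. (\<lambda>\<omega>. B \<omega> t) \<in> borel_measurable M) \<and>
     (\<forall>\<omega>\<in>space M. B \<omega> 0 = 0 \<and> continuous_on {0..} (B \<omega>)) \<and>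
     (\<forall>ts :: real list. sorted_wrt (<) ts \<and> ts \<noteq> [] \<and> 0 \<le> hd ts \<longrightarrow>
        prob_space.indep_vars M (\<lambda>_. borel) (\<lambda>i \<omega>. B \<omega> (ts ! Suc i) - B \<omega> (ts ! i))
          {..<length ts - 1} \<and>
        (\<forall>i < length ts - 1. distributed M lborel (\<lambda>\<omega>. B \<omega> (ts ! Suc i) - B \<omega> (ts ! i))
            (\<lambda>x. ennreal (normal_density 0 (sqrt (ts ! Suc i - ts ! i)) x))))"

definition BM :: "'w measure \<Rightarrow> ('w \<Rightarrow> real \<Rightarrow> 'a::euclidean_space) \<Rightarrow> bool" where
  "BM M X \<longleftrightarrow> prob_space M \<and>
     (\<forall>b\<in>Basis. std_BM M (\<lambda>\<omega> t. X \<omega> t \<bullet> b)) \<and>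
     prob_space.indep_vars M (\<lambda>_. path_space) (\<lambda>b. path_of (\<lambda>\<omega> t. X \<omega> t \<bullet> b)) Basis"

text \<open>Independence of two random variables with possibly different value spaces
  (the library's indep_var requires a common value type).\<close>

definition indep_rvs :: "'w measure \<Rightarrow> 'b measure \<Rightarrow> ('w \<Rightarrow> 'b) \<Rightarrow> 'c measure \<Rightarrow> ('w \<Rightarrow> 'c) \<Rightarrow> bool" where
  "indep_rvs M Ma A Mb B \<longleftrightarrow> A \<in> measurable M Ma \<and> B \<in> measurable M Mb \<and>
     prob_space.indep_set M {A -` S \<inter> space M | S. S \<in> sets Ma} {B -` S \<inter> space M | S. S \<in> sets Mb}"

text \<open>First exit time from D: inf {t >= 0. W t \<notin> D}, with inf of the empty set = oo.\<close>

definition exit_time :: "'a set \<Rightarrow> (real \<Rightarrow> 'a) \<Rightarrow> ereal" where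
  "exit_time D W = Inf ((\<lambda>t. ereal t) ` {t. 0 \<le> t \<and> W t \<notin> D})"

definition iterated_BM :: "'a::real_vector \<Rightarrow> ('w \<Rightarrow> real \<Rightarrow> 'a) \<Rightarrow> ('w \<Rightarrow> real \<Rightarrow> 'a)
    \<Rightarrow> ('w \<Rightarrow> real \<Rightarrow> real) \<Rightarrow> 'w \<Rightarrow> real \<Rightarrow> 'a" where
  "iterated_BM z Xp Xm Y \<omega> t =
     z + (if 0 \<le> Y \<omega> t then Xp \<omega> (Y \<omega> t) else Xm \<omega> (- Y \<omega> t))"

definition brownian_time_BM :: "'a::real_vector \<Rightarrow> ('w \<Rightarrow> real \<Rightarrow> 'a)
    \<Rightarrow> ('w \<Rightarrow> real \<Rightarrow> real) \<Rightarrow> 'w \<Rightarrow> real \<Rightarrow> 'a" where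
  "brownian_time_BM z X Y \<omega> t = z + X \<omega> \<bar>Y \<omega> t\<bar>"

end

theory Submission
  imports Defs
begin

text \<open>
  Write \<open>M\<^sup>+(y)\<close> and \<open>M\<^sup>-(y)\<close> for the maxima of \<open>y\<close> and \<open>-y\<close> on \<open>[0, t]\<close>. The iterated
  Brownian motion stays in \<open>D\<close> up to time \<open>t\<close> iff \<open>z + X\<^sup>+\<close> stays in \<open>D\<close> on \<open>[0, M\<^sup>+(Y)]\<close> and
  \<open>z + X\<^sup>-\<close> on \<open>[0, M\<^sup>-(Y)]\<close>, while the Brownian-time Brownian motion stays in \<open>D\<close> iff
  \<open>z + X\<close> stays in \<open>D\<close> on \<open>[0, max (M\<^sup>+(Y\<^sub>1)) (M\<^sup>-(Y\<^sub>1))]\<close>. With the disjoint path sets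
  \<open>S\<^sup>+ = {(x, y). M\<^sup>-(y) \<le> M\<^sup>+(y) \<and> z + x stays in D on [0, M\<^sup>+(y)]}\<close> and
  \<open>S\<^sup>- = {(x, y). M\<^sup>+(y) < M\<^sup>-(y) \<and> z + x stays in D on [0, M\<^sup>-(y)]}\<close>, the first event is
  contained in \<open>{(X\<^sup>+, Y) \<in> S\<^sup>+} \<union> {(X\<^sup>-, Y) \<in> S\<^sup>-}\<close> and the second one is \<open>{(X, Y\<^sub>1) \<in> S\<^sup>+ \<union> S\<^sup>-}\<close>.
  As \<open>(X\<^sup>+, Y)\<close>, \<open>(X\<^sup>-, Y)\<close> and \<open>(X, Y\<^sub>1)\<close> all have the same law, this even gives the constant 1
  instead of 2.
  To be measurable for the product \<open>\<sigma>\<close>-algebra on paths, \<open>S\<^sup>+\<close> and \<open>S\<^sup>-\<close> are described through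
  rational times and a positive distance to \<open>-D\<close>.
\<close>

section \<open>Exit times of continuous paths\<close>

lemma exit_time_gt_imp_mem:
  assumes "exit_time D w > ereal t" "s \<in> {0..t}"
  shows "w s \<in> D"
proof (rule ccontr)
  assume "w s \<notin> D"
  hence "exit_time D w \<le> ereal s"
    unfolding exit_time_def using assms(2) by (intro Inf_lower) auto
  thus False using assms by (meson atLeastAtMost_iff ereal_less_eq(3) leD order_trans)
qed

lemma exit_time_gt_iff:
  fixes w :: "real \<Rightarrow> 'a::topological_space"
  assumes w: "continuous_on {0..} w" and D: "open D" and t: "0 \<le> t"
  shows "exit_time D w > ereal t \<longleftrightarrow> (\<forall>s\<in>{0..t}. w s \<in> D)"
proof
  assume stays: "\<forall>s\<in>{0..t}. w s \<in> D"
  define F where "F = {s. 0 \<le> s \<and> w s \<notin> D}"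
  show "exit_time D w > ereal t"
  proof (cases "F = {}")
    case True
    thus ?thesis unfolding exit_time_def F_def[symmetric] by (simp add: top_ereal_def)
  next
    case False
    have "F = {0..} \<inter> w -` (- D)" unfolding F_def by auto
    hence "closed F" using continuous_closed_preimage[OF w, of "- D"] D by auto
    moreover have bdd: "bdd_below F" unfolding F_def by (auto intro: bdd_belowI[of _ 0])
    ultimately have "Inf F \<in> F" using False by (intro closed_contains_Inf)
    hence "ereal t < ereal (Inf F)" using stays unfolding F_def by force
    also have "ereal (Inf F) \<le> exit_time D w"
      unfolding exit_time_def F_def[symmetric]
      by (rule Inf_greatest) (auto intro: cInf_lower[OF _ bdd])
    finally show ?thesis .
  qed
qed (use exit_time_gt_imp_mem in blast)

lemma Rats_dense_continuous_closed:
  fixes f :: "real \<Rightarrow> 'b::metric_space"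
  assumes ab: "a < b" and f: "continuous_on {a..b} f" and C: "closed C"
    and Rats: "\<And>q. q \<in> \<rat> \<Longrightarrow> a \<le> q \<Longrightarrow> q < b \<Longrightarrow> f q \<in> C" and s: "s \<in> {a..b}"
  shows "f s \<in> C"
proof (rule ccontr)
  assume "f s \<notin> C"
  then obtain e where e: "e > 0" "ball (f s) e \<subseteq> - C"
    using C by (meson ComplI open_Compl open_contains_ball)
  obtain d where d: "d > 0" "\<forall>x\<in>{a..b}. dist x s < d \<longrightarrow> dist (f x) (f s) < e"
    using f s e(1) unfolding continuous_on_iff by blast
  have "max a (s - d) < min b (s + d)" using ab s d(1) by auto
  then obtain q where q: "q \<in> \<rat>" "max a (s - d) < q" "q < min b (s + d)"
    using Rats_dense_in_real by blast
  have "dist (f q) (f s) < e" using d(2) q by (auto simp: dist_real_def)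
  hence "f q \<in> - C" using e(2) by (auto simp: dist_commute)
  thus False using Rats q by auto
qed

lemma all_values_up_to_path_iff:
  fixes y :: "real \<Rightarrow> real"
  assumes y: "continuous_on {0..t} y" "y 0 = 0"
  shows "(\<forall>s\<in>{0..t}. \<forall>u\<in>{0..y s}. P u) \<longleftrightarrow> (\<forall>s\<in>{0..t}. 0 \<le> y s \<longrightarrow> P (y s))"
proof safe
  fix s u assume s: "s \<in> {0..t}" and u: "u \<in> {0..y s}"
    and H: "\<forall>s\<in>{0..t}. 0 \<le> y s \<longrightarrow> P (y s)"
  have "continuous_on {0..s} y" using continuous_on_subset[OF y(1)] s by auto
  then obtain s' where "0 \<le> s'" "s' \<le> s" "y s' = u"
    using IVT'[of y 0 u s] u y(2) s by auto
  thus "P u" using H s u by force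
qed auto

section \<open>Staying in D along the range of a time change\<close>

text \<open>
  For \<open>c > 0\<close>, \<open>stays_with_margin D z t x y c\<close> is a countable form of ``\<open>z + x u\<close> has distance
  at least \<open>c\<close> from \<open>-D\<close> for \<open>0 \<le> u \<le> M\<^sup>+(y)\<close>'', and \<open>dominates_negation t y\<close> one of
  \<open>M\<^sup>-(y) \<le> M\<^sup>+(y)\<close>.
\<close>

definition stays_with_margin ::
    "'a::real_normed_vector set \<Rightarrow> 'a \<Rightarrow> real \<Rightarrow> (real \<Rightarrow> 'a) \<Rightarrow> (real \<Rightarrow> real) \<Rightarrow> real \<Rightarrow> bool" where
  "stays_with_margin D z t x y c \<longleftrightarrow>
     (\<forall>r q :: rat. 0 \<le> real_of_rat r \<longrightarrow> 0 \<le> real_of_rat q \<longrightarrow> real_of_rat q \<le> t \<longrightarrow> real_of_rat r < y (real_of_rat q) \<longrightarrow>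
        c \<le> infdist (z + x (real_of_rat r)) (- D))"

definition dominates_negation :: "real \<Rightarrow> (real \<Rightarrow> real) \<Rightarrow> bool" where
  "dominates_negation t y \<longleftrightarrow>
     (\<forall>q :: rat. 0 \<le> real_of_rat q \<longrightarrow> real_of_rat q \<le> t \<longrightarrow>
        (\<exists>q' :: rat. 0 \<le> real_of_rat q' \<and> real_of_rat q' \<le> t \<and> - y (real_of_rat q) \<le> y (real_of_rat q')))"

lemma stays_with_margin_iff:
  "stays_with_margin D z t x y c \<longleftrightarrow>
     (\<forall>r\<in>\<rat>. \<forall>q\<in>\<rat>. 0 \<le> r \<longrightarrow> 0 \<le> q \<longrightarrow> q \<le> t \<longrightarrow> r < y q \<longrightarrow> c \<le> infdist (z + x r) (- D))"
  unfolding stays_with_margin_def Rats_def by auto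

lemma dominates_negation_iff:
  "dominates_negation t y \<longleftrightarrow>
     (\<forall>q\<in>\<rat>. 0 \<le> q \<longrightarrow> q \<le> t \<longrightarrow> (\<exists>q'\<in>\<rat>. 0 \<le> q' \<and> q' \<le> t \<and> - y q \<le> y q'))"
  unfolding dominates_negation_def Rats_def by auto

lemma stays_with_margin_imp_mem:
  fixes x :: "real \<Rightarrow> 'a::real_normed_vector" and y :: "real \<Rightarrow> real"
  assumes t: "0 < t" and y: "continuous_on {0..t} y" and x: "continuous_on {0..} x" and x0: "z + x 0 \<in> D"
    and c: "c > 0" and margin: "stays_with_margin D z t x y c"
    and s: "s \<in> {0..t}" and u: "u \<in> {0..y s}"
  shows "z + x u \<in> D"
proof (cases "u = 0")
  case False
  have "(\<lambda>v. infdist (z + x v) (- D)) u \<in> {c..}"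
  proof (rule Rats_dense_continuous_closed[of 0 u "\<lambda>v. infdist (z + x v) (- D)" "{c..}" u])
    fix r assume r: "r \<in> \<rat>" "0 \<le> r" "r < u"
    have "\<exists>q\<in>\<rat>. 0 \<le> q \<and> q < t \<and> r < y q"
    proof (rule ccontr)
      assume none: "\<not> (\<exists>q\<in>\<rat>. 0 \<le> q \<and> q < t \<and> r < y q)"
      have "y s \<in> {..r}"
      proof (rule Rats_dense_continuous_closed[of 0 t y "{..r}" s])
        fix q assume "q \<in> \<rat>" "0 \<le> q" "q < t"
        thus "y q \<in> {..r}" using none by (auto simp: not_less)
      qed (use t y s in auto)
      thus False using r u by auto
    qed
    then obtain q where "q \<in> \<rat>" "0 \<le> q" "q \<le> t" "r < y q" by auto
    thus "infdist (z + x r) (- D) \<in> {c..}"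
      using margin r(1,2) unfolding stays_with_margin_iff by simp
  qed (use False u in \<open>auto intro!: continuous_intros continuous_on_subset[OF x]\<close>)
  hence "infdist (z + x u) (- D) \<noteq> 0" using c by auto
  thus ?thesis by (metis ComplI infdist_zero)
qed (use x0 in simp)

text \<open>A compact piece of the path \<open>z + x\<close> inside the open set \<open>D\<close> keeps a positive distance from \<open>-D\<close>.\<close>

lemma ex_stays_with_margin:
  fixes x :: "real \<Rightarrow> 'a::real_normed_vector" and y :: "real \<Rightarrow> real"
  assumes t: "0 \<le> t" and y: "continuous_on {0..t} y" "y 0 = 0" and x: "continuous_on {0..} x"
    and D: "open D" "D \<noteq> UNIV" and stays: "\<forall>s\<in>{0..t}. \<forall>u\<in>{0..y s}. z + x u \<in> D"
  shows "\<exists>k::nat. stays_with_margin D z t x y (1 / Suc k)"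
proof -
  obtain s0 where s0: "s0 \<in> {0..t}" "\<forall>s\<in>{0..t}. y s \<le> y s0"
    using continuous_attains_sup[of "{0..t}" y] y t by auto
  define h where "h u = infdist (z + x u) (- D)" for u
  have "continuous_on {0..y s0} h"
    unfolding h_def by (intro continuous_intros continuous_on_subset[OF x]) auto
  moreover have "0 \<le> y s0" using s0(2)[rule_format, of 0] t y(2) by simp
  ultimately obtain u0 where u0: "u0 \<in> {0..y s0}" "\<forall>u\<in>{0..y s0}. h u0 \<le> h u"
    using continuous_attains_inf[of "{0..y s0}" h] by auto
  have "h u0 > 0"
    unfolding h_def using stays s0(1) u0(1) D by (intro infdist_pos_not_in_closed) auto
  then obtain n :: nat where n: "n > 0" "inverse (of_nat n) < h u0"
    using ex_inverse_of_nat_less by blast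
  have "stays_with_margin D z t x y (1 / Suc (n - 1))"
    unfolding stays_with_margin_iff
  proof (intro ballI impI)
    fix r q assume "0 \<le> r" "0 \<le> q" "q \<le> t" "r < y q"
    moreover have "y q \<le> y s0" using s0(2) \<open>0 \<le> q\<close> \<open>q \<le> t\<close> by simp
    ultimately have "r \<in> {0..y s0}" by simp
    hence "h u0 \<le> infdist (z + x r) (- D)" using u0(2) unfolding h_def by blast
    moreover have "1 / real (Suc (n - 1)) \<le> h u0" using n by (simp add: field_simps)
    ultimately show "1 / real (Suc (n - 1)) \<le> infdist (z + x r) (- D)" by linarith
  qed
  thus ?thesis ..
qed

lemma ex_stays_with_margin_iff:
  fixes x :: "real \<Rightarrow> 'a::real_normed_vector" and y :: "real \<Rightarrow> real"
  assumes t: "0 < t" and y: "continuous_on {0..t} y" "y 0 = 0" and x: "continuous_on {0..} x"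
    and D: "open D" "D \<noteq> UNIV" and x0: "z + x 0 \<in> D"
  shows "(\<exists>k::nat. stays_with_margin D z t x y (1 / Suc k)) \<longleftrightarrow> (\<forall>s\<in>{0..t}. \<forall>u\<in>{0..y s}. z + x u \<in> D)"
proof
  assume "\<exists>k::nat. stays_with_margin D z t x y (1 / Suc k)"
  then obtain k :: nat where "stays_with_margin D z t x y (1 / Suc k)" ..
  thus "\<forall>s\<in>{0..t}. \<forall>u\<in>{0..y s}. z + x u \<in> D"
    using stays_with_margin_imp_mem[OF t y(1) x x0, of "1 / Suc k"] by simp
qed (rule ex_stays_with_margin[OF less_imp_le[OF t] y x D])

lemma dominates_negation_imp_abs_le:
  fixes y :: "real \<Rightarrow> real"
  assumes t: "0 < t" and y: "continuous_on {0..t} y" and dom: "dominates_negation t y"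
    and s: "s \<in> {0..t}"
  shows "\<exists>s'\<in>{0..t}. \<bar>y s\<bar> \<le> y s'"
proof -
  obtain s0 where s0: "s0 \<in> {0..t}" "\<forall>s\<in>{0..t}. y s \<le> y s0"
    using continuous_attains_sup[of "{0..t}" y] y t by auto
  have "(\<lambda>s. - y s) s \<in> {..y s0}"
  proof (rule Rats_dense_continuous_closed[of 0 t "\<lambda>s. - y s"])
    fix q assume "q \<in> \<rat>" "0 \<le> q" "q < t"
    then obtain q' where "0 \<le> q'" "q' \<le> t" "- y q \<le> y q'"
      using dom unfolding dominates_negation_iff by force
    thus "- y q \<in> {..y s0}" using s0(2) by force
  qed (use t y s in \<open>auto intro: continuous_on_minus\<close>)
  thus ?thesis using s s0 by (intro bexI[of _ s0]) (auto simp: abs_le_iff)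
qed

lemma not_dominates_negation_imp_abs_le:
  fixes y :: "real \<Rightarrow> real"
  assumes t: "0 < t" and y: "continuous_on {0..t} y" and dom: "\<not> dominates_negation t y"
    and s: "s \<in> {0..t}"
  shows "\<exists>s'\<in>{0..t}. \<bar>y s\<bar> \<le> - y s'"
proof -
  obtain q where q: "q \<in> \<rat>" "0 \<le> q" "q \<le> t" "\<forall>q'\<in>\<rat>. 0 \<le> q' \<longrightarrow> q' \<le> t \<longrightarrow> y q' < - y q"
    using dom unfolding dominates_negation_iff by (meson not_le)
  obtain s1 where s1: "s1 \<in> {0..t}" "\<forall>s\<in>{0..t}. y s1 \<le> y s"
    using continuous_attains_inf[of "{0..t}" y] y t by auto
  have "y s \<in> {..- y q}"
  proof (rule Rats_dense_continuous_closed[of 0 t y])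
    fix q' assume "q' \<in> \<rat>" "0 \<le> q'" "q' < t"
    thus "y q' \<in> {..- y q}" using q(2-4) by force
  qed (use t y s in auto)
  moreover have "y q \<in> {y s1..}" "y s \<in> {y s1..}" using q(2,3) s s1(2) by auto
  ultimately show ?thesis using s1(1) by (intro bexI[of _ s1]) auto
qed

section \<open>The path sets \<open>S\<^sup>+\<close> and \<open>S\<^sup>-\<close>\<close>

definition stay_set_pos :: "'a::euclidean_space set \<Rightarrow> 'a \<Rightarrow> real \<Rightarrow> ((real \<Rightarrow> 'a) \<times> (real \<Rightarrow> real)) set" where
  "stay_set_pos D z t = {p \<in> space (path_space \<Otimes>\<^sub>M path_space).
     dominates_negation t (snd p) \<and> (\<exists>k::nat. stays_with_margin D z t (fst p) (snd p) (1 / Suc k))}"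

definition stay_set_neg :: "'a::euclidean_space set \<Rightarrow> 'a \<Rightarrow> real \<Rightarrow> ((real \<Rightarrow> 'a) \<times> (real \<Rightarrow> real)) set" where
  "stay_set_neg D z t = {p \<in> space (path_space \<Otimes>\<^sub>M path_space).
     \<not> dominates_negation t (snd p) \<and> (\<exists>k::nat. stays_with_margin D z t (fst p) (\<lambda>s. - snd p s) (1 / Suc k))}"

lemma borel_measurable_PiM_component:
  "(\<lambda>x. x i) \<in> borel_measurable (PiM I (\<lambda>_. (borel :: 'b::topological_space measure)))"
proof (cases "i \<in> I")
  case False
  have "(\<lambda>x. x i) \<in> borel_measurable (PiM I (\<lambda>_. (borel :: 'b measure))) \<longleftrightarrow>
        (\<lambda>x. undefined :: 'b) \<in> borel_measurable (PiM I (\<lambda>_. (borel :: 'b measure)))"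
    by (rule measurable_cong) (use False in \<open>auto simp: space_PiM PiE_def extensional_def\<close>)
  thus ?thesis by simp
qed (rule measurable_component_singleton)

lemma sets_stay_sets:
  "stay_set_pos D z t \<in> sets (path_space \<Otimes>\<^sub>M path_space)"
  "stay_set_neg D z t \<in> sets (path_space \<Otimes>\<^sub>M path_space)"
proof -
  have [measurable]: "(\<lambda>p. snd p q) \<in> borel_measurable
      ((path_space :: (real \<Rightarrow> 'a::euclidean_space) measure) \<Otimes>\<^sub>M (path_space :: (real \<Rightarrow> real) measure))" for q
    unfolding path_space_def by (rule measurable_compose[OF measurable_snd borel_measurable_PiM_component])
  have "(\<lambda>p. fst p r) \<in> borel_measurable
      ((path_space :: (real \<Rightarrow> 'a) measure) \<Otimes>\<^sub>M (path_space :: (real \<Rightarrow> real) measure))" for r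
    unfolding path_space_def by (rule measurable_compose[OF measurable_fst borel_measurable_PiM_component])
  moreover have "continuous_on UNIV (\<lambda>v. infdist (z + v) (- D))" by (intro continuous_intros)
  ultimately have [measurable]: "(\<lambda>p. infdist (z + fst p r) (- D)) \<in> borel_measurable
      ((path_space :: (real \<Rightarrow> 'a) measure) \<Otimes>\<^sub>M (path_space :: (real \<Rightarrow> real) measure))" for r
    using measurable_compose[OF _ borel_measurable_continuous_onI] by blast
  show "stay_set_pos D z t \<in> sets (path_space \<Otimes>\<^sub>M path_space)"
    unfolding stay_set_pos_def dominates_negation_def stays_with_margin_def by measurable
  show "stay_set_neg D z t \<in> sets (path_space \<Otimes>\<^sub>M path_space)"
    unfolding stay_set_neg_def dominates_negation_def stays_with_margin_def by measurable
qed

lemma restrict_in_stay_set_pos_iff: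
  "(restrict x {0..}, restrict y {0..}) \<in> stay_set_pos D z t \<longleftrightarrow>
     dominates_negation t y \<and> (\<exists>k::nat. stays_with_margin D z t x y (1 / Suc k))"
  by (simp add: stay_set_pos_def dominates_negation_def stays_with_margin_def path_space_def
      space_pair_measure space_PiM del: zero_le_of_rat_iff cong: conj_cong)

lemma restrict_in_stay_set_neg_iff:
  "(restrict x {0..}, restrict y {0..}) \<in> stay_set_neg D z t \<longleftrightarrow>
     \<not> dominates_negation t y \<and> (\<exists>k::nat. stays_with_margin D z t x (\<lambda>s. - y s) (1 / Suc k))"
  by (simp add: stay_set_neg_def dominates_negation_def stays_with_margin_def path_space_def
      space_pair_measure space_PiM del: zero_le_of_rat_iff cong: conj_cong)

lemma iterated_path_in_stay_sets:
  fixes x1 x2 :: "real \<Rightarrow> 'a::euclidean_space" and y :: "real \<Rightarrow> real"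
  assumes t: "0 < t" and x1: "continuous_on {0..} x1" and x2: "continuous_on {0..} x2"
    and y: "continuous_on {0..} y" "y 0 = 0" and D: "open D" "D \<noteq> UNIV" and x20: "z + x2 0 \<in> D"
    and exit: "exit_time D (\<lambda>s. z + (if 0 \<le> y s then x1 (y s) else x2 (- y s))) > ereal t"
  shows "(restrict x1 {0..}, restrict y {0..}) \<in> stay_set_pos D z t \<or>
         (restrict x2 {0..}, restrict y {0..}) \<in> stay_set_neg D z t"
proof -
  have stays: "z + (if 0 \<le> y s then x1 (y s) else x2 (- y s)) \<in> D" if "s \<in> {0..t}" for s
    using exit_time_gt_imp_mem[OF exit that] .
  have yt: "continuous_on {0..t} y" "continuous_on {0..t} (\<lambda>s. - y s)"
    using continuous_on_subset[OF y(1)] by (auto intro: continuous_on_minus)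
  have y0: "- y 0 = 0" using y(2) by simp
  have x10: "z + x1 0 \<in> D" using stays[of 0] t y(2) by simp
  have "\<forall>s\<in>{0..t}. 0 \<le> y s \<longrightarrow> z + x1 (y s) \<in> D"
  proof (intro ballI impI)
    fix s assume "s \<in> {0..t}" "0 \<le> y s"
    thus "z + x1 (y s) \<in> D" using stays[of s] by simp
  qed
  hence "\<exists>k::nat. stays_with_margin D z t x1 y (1 / Suc k)"
    unfolding ex_stays_with_margin_iff[OF t yt(1) y(2) x1 D x10] all_values_up_to_path_iff[OF yt(1) y(2)] .
  moreover have "\<forall>s\<in>{0..t}. 0 \<le> - y s \<longrightarrow> z + x2 (- y s) \<in> D"
  proof (intro ballI impI)
    fix s assume "s \<in> {0..t}" "0 \<le> - y s"
    thus "z + x2 (- y s) \<in> D" using stays[of s] x20 by (cases "y s = 0") auto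
  qed
  hence "\<exists>k::nat. stays_with_margin D z t x2 (\<lambda>s. - y s) (1 / Suc k)"
    unfolding ex_stays_with_margin_iff[OF t yt(2) y0 x2 D x20] all_values_up_to_path_iff[OF yt(2) y0] .
  ultimately show ?thesis
    unfolding restrict_in_stay_set_pos_iff restrict_in_stay_set_neg_iff by blast
qed

lemma time_changed_path_stays_iff:
  fixes x :: "real \<Rightarrow> 'a::euclidean_space" and y :: "real \<Rightarrow> real"
  assumes t: "0 < t" and x: "continuous_on {0..} x" and y: "continuous_on {0..} y" "y 0 = 0"
    and D: "open D" "D \<noteq> UNIV" and x0: "z + x 0 \<in> D"
  shows "exit_time D (\<lambda>s. z + x \<bar>y s\<bar>) > ereal t \<longleftrightarrow>
         (restrict x {0..}, restrict y {0..}) \<in> stay_set_pos D z t \<union> stay_set_neg D z t"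
proof
  assume "exit_time D (\<lambda>s. z + x \<bar>y s\<bar>) > ereal t"
  moreover have "(\<lambda>s. z + x \<bar>y s\<bar>) = (\<lambda>s. z + (if 0 \<le> y s then x (y s) else x (- y s)))"
    by auto
  ultimately show "(restrict x {0..}, restrict y {0..}) \<in> stay_set_pos D z t \<union> stay_set_neg D z t"
    using iterated_path_in_stay_sets[OF t x x y D x0] by auto
next
  assume mem: "(restrict x {0..}, restrict y {0..}) \<in> stay_set_pos D z t \<union> stay_set_neg D z t"
  have yt: "continuous_on {0..t} y" "continuous_on {0..t} (\<lambda>s. - y s)"
    using continuous_on_subset[OF y(1)] by (auto intro: continuous_on_minus)
  have y0: "- y 0 = 0" using y(2) by simp
  have "z + x \<bar>y s\<bar> \<in> D" if s: "s \<in> {0..t}" for s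
  proof -
    from mem consider
        (pos) "dominates_negation t y" "\<exists>k::nat. stays_with_margin D z t x y (1 / Suc k)"
      | (neg) "\<not> dominates_negation t y" "\<exists>k::nat. stays_with_margin D z t x (\<lambda>s. - y s) (1 / Suc k)"
      unfolding Un_iff restrict_in_stay_set_pos_iff restrict_in_stay_set_neg_iff by blast
    thus ?thesis
    proof cases
      case pos
      obtain s' where "s' \<in> {0..t}" "\<bar>y s\<bar> \<le> y s'"
        using dominates_negation_imp_abs_le[OF t yt(1) pos(1) s] ..
      thus ?thesis using pos(2) unfolding ex_stays_with_margin_iff[OF t yt(1) y(2) x D x0] by force
    next
      case neg
      obtain s' where "s' \<in> {0..t}" "\<bar>y s\<bar> \<le> - y s'"
        using not_dominates_negation_imp_abs_le[OF t yt(1) neg(1) s] ..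
      thus ?thesis using neg(2) unfolding ex_stays_with_margin_iff[OF t yt(2) y0 x D x0] by force
    qed
  qed
  moreover have "continuous_on {0..} (\<lambda>s. z + x \<bar>y s\<bar>)"
    by (intro continuous_on_add continuous_on_const continuous_on_compose2[OF x]
        continuous_on_rabs y(1)) auto
  ultimately show "exit_time D (\<lambda>s. z + x \<bar>y s\<bar>) > ereal t"
    using exit_time_gt_iff[OF _ D(1)] t by simp
qed

section \<open>Laws of Brownian paths\<close>

lemma measurable_path_of:
  assumes "\<And>t. t \<ge> 0 \<Longrightarrow> (\<lambda>\<omega>. B \<omega> t) \<in> borel_measurable M"
  shows "path_of B \<in> measurable M path_space"
  unfolding path_of_def path_space_def by (rule measurable_restrict) (use assms in auto)

lemma measurable_path_of_std_BM: "std_BM M B \<Longrightarrow> path_of B \<in> measurable M path_space"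
  unfolding std_BM_def by (intro measurable_path_of) auto

text \<open>
  On the sorted grid \<open>J \<union> {0, 1}\<close>, the values of a standard Brownian motion at the times in \<open>J\<close>
  are partial sums of independent centred Gaussian increments; this determines its law on paths.
  The time 1 is added only to guarantee at least one increment.
\<close>

definition fdd_grid :: "real set \<Rightarrow> real list" where
  "fdd_grid J = sorted_list_of_set (insert 0 (insert 1 J))"

definition grid_index :: "real set \<Rightarrow> real \<Rightarrow> nat" where
  "grid_index J j = (LEAST k. fdd_grid J ! k = j)"

definition grid_increments :: "real set \<Rightarrow> ('w \<Rightarrow> real \<Rightarrow> real) \<Rightarrow> 'w \<Rightarrow> nat \<Rightarrow> real" where
  "grid_increments J B \<omega> =
     (\<lambda>i\<in>{..<length (fdd_grid J) - 1}. B \<omega> (fdd_grid J ! Suc i) - B \<omega> (fdd_grid J ! i))"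

definition increments_law :: "real set \<Rightarrow> (nat \<Rightarrow> real) measure" where
  "increments_law J = PiM {..<length (fdd_grid J) - 1}
     (\<lambda>i. density lborel (\<lambda>x. ennreal (normal_density 0 (sqrt (fdd_grid J ! Suc i - fdd_grid J ! i)) x)))"

definition sum_increments :: "real set \<Rightarrow> (nat \<Rightarrow> real) \<Rightarrow> real \<Rightarrow> real" where
  "sum_increments J d = (\<lambda>j\<in>J. \<Sum>i<grid_index J j. d i)"

definition std_BM_fdd :: "real set \<Rightarrow> (real \<Rightarrow> real) measure" where
  "std_BM_fdd J = distr (increments_law J) (PiM J (\<lambda>_. borel)) (sum_increments J)"

lemma
  assumes "finite J" "J \<subseteq> {0..}"
  shows sorted_fdd_grid: "sorted_wrt (<) (fdd_grid J)"
    and set_fdd_grid: "set (fdd_grid J) = insert 0 (insert 1 J)"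
    and length_fdd_grid: "2 \<le> length (fdd_grid J)"
    and fdd_grid_0: "fdd_grid J ! 0 = 0"
    and nth_fdd_grid_nonneg: "i < length (fdd_grid J) \<Longrightarrow> 0 \<le> fdd_grid J ! i"
proof -
  let ?S = "insert (0::real) (insert 1 J)"
  show sorted: "sorted_wrt (<) (fdd_grid J)"
    unfolding fdd_grid_def by (rule strict_sorted_list_of_set)
  show set: "set (fdd_grid J) = ?S"
    unfolding fdd_grid_def by (rule set_sorted_list_of_set) (use assms(1) in simp)
  have "card {0::real, 1} \<le> card ?S" using assms(1) by (intro card_mono) auto
  thus len: "2 \<le> length (fdd_grid J)" unfolding fdd_grid_def by simp
  then obtain k where k: "k < length (fdd_grid J)" "fdd_grid J ! k = 0"
    using set by (metis in_set_conv_nth insertI1)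
  have "fdd_grid J ! 0 \<le> fdd_grid J ! k"
    using sorted k(1) by (cases "k = 0") (auto simp: sorted_wrt_iff_nth_less intro: less_imp_le)
  moreover have "fdd_grid J ! 0 \<in> set (fdd_grid J)" by (rule nth_mem) (use len in linarith)
  hence "0 \<le> fdd_grid J ! 0" using set assms(2) by auto
  ultimately show "fdd_grid J ! 0 = 0" using k by simp
  show "i < length (fdd_grid J) \<Longrightarrow> 0 \<le> fdd_grid J ! i"
    using set nth_mem[of i "fdd_grid J"] assms(2) by auto
qed

lemma
  assumes "finite J" "J \<subseteq> {0..}" "j \<in> J"
  shows grid_index_less: "grid_index J j < length (fdd_grid J)"
    and nth_grid_index: "fdd_grid J ! grid_index J j = j"
proof -
  obtain k where k: "k < length (fdd_grid J)" "fdd_grid J ! k = j"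
    using set_fdd_grid[OF assms(1,2)] assms(3) by (metis in_set_conv_nth insertCI)
  show "fdd_grid J ! grid_index J j = j" unfolding grid_index_def by (rule LeastI[of _ k]) fact
  have "grid_index J j \<le> k" unfolding grid_index_def by (rule Least_le) fact
  thus "grid_index J j < length (fdd_grid J)" using k by simp
qed

lemma distr_grid_increments:
  assumes B: "std_BM M B" and J: "finite J" "J \<subseteq> {0..}"
  shows "distr M (PiM {..<length (fdd_grid J) - 1} (\<lambda>_. borel)) (grid_increments J B) = increments_law J"
proof -
  interpret prob_space M using B unfolding std_BM_def by auto
  define ts where "ts = fdd_grid J"
  define I where "I = {..<length ts - 1}"
  define incr where "incr i \<omega> = B \<omega> (ts ! Suc i) - B \<omega> (ts ! i)" for i \<omega>
  have "0 \<in> I" using length_fdd_grid[OF J] unfolding I_def ts_def by simp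
  hence "I \<noteq> {}" by blast
  have "sorted_wrt (<) ts \<and> ts \<noteq> [] \<and> 0 \<le> hd ts"
    using sorted_fdd_grid[OF J] length_fdd_grid[OF J] fdd_grid_0[OF J] unfolding ts_def
    by (metis hd_conv_nth list.size(3) not_numeral_le_zero order_refl)
  hence indep: "indep_vars (\<lambda>_. borel) incr I"
    and normal: "\<And>i. i \<in> I \<Longrightarrow> distributed M lborel (incr i)
       (\<lambda>x. ennreal (normal_density 0 (sqrt (ts ! Suc i - ts ! i)) x))"
    using B unfolding std_BM_def incr_def I_def by blast+
  have "incr i \<in> borel_measurable M" if "i \<in> I" for i
    using normal[OF that] by (auto dest: distributed_measurable)
  hence "distr M (PiM I (\<lambda>_. borel)) (\<lambda>\<omega>. \<lambda>i\<in>I. incr i \<omega>) = PiM I (\<lambda>i. distr M borel (incr i))"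
    using indep_vars_iff_distr_eq_PiM'[OF \<open>I \<noteq> {}\<close>, where M' = "\<lambda>_. borel" and X = incr] indep
    by simp
  also have "\<dots> = increments_law J"
    unfolding increments_law_def ts_def[symmetric] I_def[symmetric]
  proof (rule PiM_cong[OF refl])
    fix i assume "i \<in> I"
    have "distr M borel (incr i) = distr M lborel (incr i)" by (rule distr_cong) auto
    thus "distr M borel (incr i) =
        density lborel (\<lambda>x. ennreal (normal_density 0 (sqrt (ts ! Suc i - ts ! i)) x))"
      using distributed_distr_eq_density[OF normal[OF \<open>i \<in> I\<close>]] by simp
  qed
  finally show ?thesis unfolding grid_increments_def incr_def I_def ts_def .
qed

lemma std_BM_eq_sum_increments:
  assumes B: "std_BM M B" and J: "finite J" "J \<subseteq> {0..}" and \<omega>: "\<omega> \<in> space M"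
  shows "(\<lambda>j\<in>J. B \<omega> j) = sum_increments J (grid_increments J B \<omega>)"
proof
  fix j show "(\<lambda>j\<in>J. B \<omega> j) j = sum_increments J (grid_increments J B \<omega>) j"
  proof (cases "j \<in> J")
    case True
    have "(\<Sum>i<grid_index J j. grid_increments J B \<omega> i) =
        (\<Sum>i<grid_index J j. B \<omega> (fdd_grid J ! Suc i) - B \<omega> (fdd_grid J ! i))"
      using grid_index_less[OF J True] unfolding grid_increments_def by (intro sum.cong) auto
    also have "\<dots> = B \<omega> (fdd_grid J ! grid_index J j) - B \<omega> (fdd_grid J ! 0)"
      by (rule sum_lessThan_telescope)
    also have "\<dots> = B \<omega> j"
      using nth_grid_index[OF J True] fdd_grid_0[OF J] B \<omega> unfolding std_BM_def by auto
    finally show ?thesis using True unfolding sum_increments_def by simp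
  qed (simp add: sum_increments_def)
qed

lemma distr_std_BM_fdd:
  assumes B: "std_BM M B" and J: "finite J" "J \<subseteq> {0..}"
  shows "distr M (PiM J (\<lambda>_. borel)) (\<lambda>\<omega>. \<lambda>j\<in>J. B \<omega> j) = std_BM_fdd J"
proof -
  let ?I = "{..<length (fdd_grid J) - 1}"
  have sums: "sum_increments J \<in> measurable (PiM ?I (\<lambda>_. borel)) (PiM J (\<lambda>_. borel))"
    unfolding sum_increments_def
    by (intro measurable_restrict borel_measurable_sum borel_measurable_PiM_component)
  have "grid_increments J B \<in> measurable M (PiM ?I (\<lambda>_. borel))"
    using B nth_fdd_grid_nonneg[OF J] unfolding std_BM_def grid_increments_def
    by (intro measurable_restrict borel_measurable_diff) auto
  hence "distr M (PiM J (\<lambda>_. borel)) (sum_increments J \<circ> grid_increments J B) =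
      distr (distr M (PiM ?I (\<lambda>_. borel)) (grid_increments J B)) (PiM J (\<lambda>_. borel)) (sum_increments J)"
    by (rule distr_distr[symmetric, OF sums])
  also have "\<dots> = std_BM_fdd J"
    unfolding distr_grid_increments[OF B J] std_BM_fdd_def ..
  finally show ?thesis
    using std_BM_eq_sum_increments[OF B J] by (simp cong: distr_cong)
qed

lemma distr_restrict_path_of_std_BM:
  assumes B: "std_BM M B" and J: "finite J" "J \<subseteq> {0..}"
  shows "distr (distr M path_space (path_of B)) (PiM J (\<lambda>_. borel)) (\<lambda>\<omega>. restrict \<omega> J) = std_BM_fdd J"
proof -
  have "(\<lambda>\<omega>. restrict \<omega> J) \<in> measurable (path_space :: (real \<Rightarrow> real) measure) (PiM J (\<lambda>_. borel))"
    unfolding path_space_def using J by (intro measurable_restrict_subset) auto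
  hence "distr (distr M path_space (path_of B)) (PiM J (\<lambda>_. borel)) (\<lambda>\<omega>. restrict \<omega> J) =
      distr M (PiM J (\<lambda>_. borel)) ((\<lambda>\<omega>. restrict \<omega> J) \<circ> path_of B)"
    by (rule distr_distr[OF _ measurable_path_of_std_BM[OF B]])
  also have "\<dots> = distr M (PiM J (\<lambda>_. borel)) (\<lambda>\<omega>. \<lambda>j\<in>J. B \<omega> j)"
    by (rule distr_cong) (use J in \<open>auto simp: path_of_def fun_eq_iff\<close>)
  finally show ?thesis using distr_std_BM_fdd[OF B J] by simp
qed

lemma std_BM_path_law_eq:
  assumes B: "std_BM M B" and B': "std_BM N B'"
  shows "distr M path_space (path_of B) = distr N path_space (path_of B')"
  unfolding path_space_def
proof (rule measure_eqI_PiM_infinite)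
  show "finite_measure (distr M (PiM {0..} (\<lambda>_. borel)) (path_of B))"
    using B measurable_path_of_std_BM[OF B] unfolding std_BM_def path_space_def
    by (metis prob_space.prob_space_distr prob_space_def)
  fix A :: "real \<Rightarrow> real set" and J :: "real set"
  assume J: "finite J" "J \<subseteq> {0..}" and A: "\<And>i. i \<in> J \<Longrightarrow> A i \<in> sets borel"
  have fdd: "emeasure (distr K (PiM {0..} (\<lambda>_. borel)) (path_of C)) (prod_emb {0..} (\<lambda>_. borel) J (PiE J A))
      = emeasure (std_BM_fdd J) (PiE J A)" if C: "std_BM K C" for K :: "'x measure" and C
  proof -
    have "emeasure (distr K (PiM {0..} (\<lambda>_. borel)) (path_of C)) (prod_emb {0..} (\<lambda>_. borel) J (PiE J A))
        = emeasure (distr (distr K (PiM {0..} (\<lambda>_. borel)) (path_of C)) (PiM J (\<lambda>_. borel))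
            (\<lambda>\<omega>. restrict \<omega> J)) (PiE J A)"
      by (rule emeasure_distr_restrict[symmetric]) (use J A in \<open>auto intro: sets_PiM_I_finite\<close>)
    thus ?thesis using distr_restrict_path_of_std_BM[OF C J] unfolding path_space_def by simp
  qed
  thus "emeasure (distr M (PiM {0..} (\<lambda>_. borel)) (path_of B)) (prod_emb {0..} (\<lambda>_. borel) J (PiE J A)) =
        emeasure (distr N (PiM {0..} (\<lambda>_. borel)) (path_of B')) (prod_emb {0..} (\<lambda>_. borel) J (PiE J A))"
    using fdd[OF B] fdd[OF B'] by simp
qed simp_all

definition coord_paths :: "('w \<Rightarrow> real \<Rightarrow> 'a::euclidean_space) \<Rightarrow> 'w \<Rightarrow> 'a \<Rightarrow> real \<Rightarrow> real" where
  "coord_paths Z \<omega> = (\<lambda>b\<in>Basis. path_of (\<lambda>\<omega> t. Z \<omega> t \<bullet> b) \<omega>)"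

definition sum_coord_paths :: "('a::euclidean_space \<Rightarrow> real \<Rightarrow> real) \<Rightarrow> real \<Rightarrow> 'a" where
  "sum_coord_paths F = (\<lambda>t\<in>{0..}. \<Sum>b\<in>Basis. F b t *\<^sub>R b)"

lemma path_of_eq_sum_coord_paths: "path_of Z \<omega> = sum_coord_paths (coord_paths Z \<omega>)"
  unfolding path_of_def sum_coord_paths_def coord_paths_def
  by (auto simp: fun_eq_iff euclidean_representation)

lemma measurable_sum_coord_paths:
  "sum_coord_paths \<in> measurable (PiM Basis (\<lambda>_. path_space)) (path_space :: (real \<Rightarrow> 'a::euclidean_space) measure)"
  unfolding sum_coord_paths_def path_space_def
proof (intro measurable_restrict borel_measurable_sum borel_measurable_scaleR borel_measurable_const)
  fix t and b :: 'a assume b: "b \<in> Basis"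
  show "(\<lambda>F. F b t) \<in> borel_measurable (PiM Basis (\<lambda>_. PiM {0..} (\<lambda>_. borel)))"
    using measurable_compose[OF measurable_component_singleton[OF b] borel_measurable_PiM_component[of t "{0..}"]]
    by simp
qed

lemma measurable_coord_paths_BM:
  fixes Z :: "'w \<Rightarrow> real \<Rightarrow> 'a::euclidean_space"
  shows "BM M Z \<Longrightarrow> coord_paths Z \<in> measurable M (PiM Basis (\<lambda>_. path_space))"
  unfolding coord_paths_def BM_def by (intro measurable_restrict) (auto intro: measurable_path_of_std_BM)

lemma measurable_path_of_BM: "BM M Z \<Longrightarrow> path_of Z \<in> measurable M path_space"
  using measurable_comp[OF measurable_coord_paths_BM measurable_sum_coord_paths]
  by (simp add: comp_def path_of_eq_sum_coord_paths[abs_def])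

lemma distr_coord_paths_BM:
  assumes Z: "BM M Z"
  shows "distr M (PiM Basis (\<lambda>_. path_space)) (coord_paths Z) =
         PiM Basis (\<lambda>b. distr M path_space (path_of (\<lambda>\<omega> t. Z \<omega> t \<bullet> b)))"
proof -
  interpret prob_space M using Z unfolding BM_def by auto
  show ?thesis
    using Z indep_vars_iff_distr_eq_PiM'[where I = Basis and M' = "\<lambda>_. path_space"
        and X = "\<lambda>b. path_of (\<lambda>\<omega> t. Z \<omega> t \<bullet> b)"]
    unfolding coord_paths_def BM_def by (auto intro: measurable_path_of_std_BM)
qed

lemma BM_path_law_eq:
  assumes Z: "BM M Z" and Z': "BM N Z'"
  shows "distr M path_space (path_of Z) = distr N path_space (path_of Z')"
proof -
  have via_coords: "distr K path_space (path_of W) =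
      distr (distr K (PiM Basis (\<lambda>_. path_space)) (coord_paths W)) path_space sum_coord_paths"
    if "BM K W" for K :: "'x measure" and W
    using distr_distr[OF measurable_sum_coord_paths measurable_coord_paths_BM[OF that]]
    by (simp add: comp_def path_of_eq_sum_coord_paths[abs_def])
  have coords_eq: "PiM Basis (\<lambda>b. distr M path_space (path_of (\<lambda>\<omega> t. Z \<omega> t \<bullet> b)))
      = PiM Basis (\<lambda>b. distr N path_space (path_of (\<lambda>\<omega> t. Z' \<omega> t \<bullet> b)))"
    using Z Z' unfolding BM_def by (intro PiM_cong refl std_BM_path_law_eq) auto
  show ?thesis
    unfolding via_coords[OF Z] via_coords[OF Z'] distr_coord_paths_BM[OF Z] distr_coord_paths_BM[OF Z'] coords_eq
    by (rule refl)
qed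

lemma
  assumes "BM M Z" "\<omega> \<in> space M"
  shows continuous_on_BM_path: "continuous_on {0..} (Z \<omega>)"
    and BM_path_0: "Z \<omega> 0 = 0"
proof -
  have coords: "\<forall>b\<in>Basis. continuous_on {0..} (\<lambda>t. Z \<omega> t \<bullet> b) \<and> Z \<omega> 0 \<bullet> b = 0"
    using assms unfolding BM_def std_BM_def by auto
  have "continuous_on {0..} (\<lambda>t. \<Sum>b\<in>Basis. (Z \<omega> t \<bullet> b) *\<^sub>R b)"
    using coords by (intro continuous_on_sum continuous_on_scaleR continuous_on_const) auto
  thus "continuous_on {0..} (Z \<omega>)" by (simp add: euclidean_representation)
  show "Z \<omega> 0 = 0" using coords euclidean_all_zero_iff by blast
qed

lemma
  assumes "std_BM M B" "\<omega> \<in> space M"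
  shows continuous_on_std_BM_path: "continuous_on {0..} (B \<omega>)"
    and std_BM_path_0: "B \<omega> 0 = 0"
  using assms unfolding std_BM_def by auto

lemma indep_rvs_distr_pair:
  assumes "prob_space M" and indep: "indep_rvs M Ma A Mb B"
  shows "distr M (Ma \<Otimes>\<^sub>M Mb) (\<lambda>\<omega>. (A \<omega>, B \<omega>)) = distr M Ma A \<Otimes>\<^sub>M distr M Mb B"
proof -
  interpret prob_space M by fact
  have A: "A \<in> measurable M Ma" and B: "B \<in> measurable M Mb"
    and ind: "indep_set {A -` S \<inter> space M | S. S \<in> sets Ma} {B -` S \<inter> space M | S. S \<in> sets Mb}"
    using indep unfolding indep_rvs_def by auto
  interpret MA: prob_space "distr M Ma A" by (rule prob_space_distr[OF A])
  interpret MB: prob_space "distr M Mb B" by (rule prob_space_distr[OF B])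
  show ?thesis
  proof (rule pair_measure_eqI[symmetric])
    fix S T assume S: "S \<in> sets (distr M Ma A)" and T: "T \<in> sets (distr M Mb B)"
    have "(\<lambda>\<omega>. (A \<omega>, B \<omega>)) -` (S \<times> T) \<inter> space M = (A -` S \<inter> space M) \<inter> (B -` T \<inter> space M)"
      by auto
    moreover have "prob ((A -` S \<inter> space M) \<inter> (B -` T \<inter> space M)) =
        prob (A -` S \<inter> space M) * prob (B -` T \<inter> space M)"
      using S T by (intro indep_setD[OF ind]) auto
    ultimately show "emeasure (distr M Ma A) S * emeasure (distr M Mb B) T =
        emeasure (distr M (Ma \<Otimes>\<^sub>M Mb) (\<lambda>\<omega>. (A \<omega>, B \<omega>))) (S \<times> T)"
      using A B S T measurable_Pair[OF A B]
      by (simp add: emeasure_distr emeasure_eq_measure ennreal_mult)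
  qed (simp_all add: MA.sigma_finite_measure MB.sigma_finite_measure)
qed

lemma indep_rvs_compose_left:
  assumes "prob_space M" and indep: "indep_rvs M Ma A Mc C" and f: "f \<in> measurable Ma Mb"
  shows "indep_rvs M Mb (\<lambda>\<omega>. f (A \<omega>)) Mc C"
proof -
  interpret prob_space M by fact
  have A: "A \<in> measurable M Ma"
    and ind: "indep_set {A -` S \<inter> space M | S. S \<in> sets Ma} {C -` S \<inter> space M | S. S \<in> sets Mc}"
    using indep unfolding indep_rvs_def by auto
  have "(\<lambda>\<omega>. f (A \<omega>)) -` S \<inter> space M = A -` (f -` S \<inter> space Ma) \<inter> space M" for S
    using measurable_space[OF A] by auto
  hence sub: "{(\<lambda>\<omega>. f (A \<omega>)) -` S \<inter> space M | S. S \<in> sets Mb} \<subseteq> {A -` S \<inter> space M | S. S \<in> sets Ma}"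
    using measurable_sets[OF f] by blast
  have "indep_set {(\<lambda>\<omega>. f (A \<omega>)) -` S \<inter> space M | S. S \<in> sets Mb} {C -` S \<inter> space M | S. S \<in> sets Mc}"
    unfolding indep_set_def
    by (rule indep_sets_mono_sets[OF ind[unfolded indep_set_def]]) (use sub in \<open>auto split: bool.split\<close>)
  thus ?thesis using indep measurable_compose[OF A f] unfolding indep_rvs_def by auto
qed

lemma BM_pair_law_eq:
  assumes "BM M X" "std_BM M Y" "indep_rvs M path_space (path_of X) path_space (path_of Y)"
    and "BM N X'" "std_BM N Y'" "indep_rvs N path_space (path_of X') path_space (path_of Y')"
  shows "distr M (path_space \<Otimes>\<^sub>M path_space) (\<lambda>\<omega>. (path_of X \<omega>, path_of Y \<omega>)) =
         distr N (path_space \<Otimes>\<^sub>M path_space) (\<lambda>\<omega>. (path_of X' \<omega>, path_of Y' \<omega>))"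
proof -
  have "prob_space M" "prob_space N" using assms(2,5) unfolding std_BM_def by auto
  thus ?thesis
    using assms by (simp add: indep_rvs_distr_pair BM_path_law_eq[of M X N X'] std_BM_path_law_eq[of M Y N Y'])
qed

section \<open>Comparison of the exit probabilities\<close>

lemma measure_le_of_equal_laws:
  assumes M: "finite_measure M" and N: "finite_measure N"
    and f: "f \<in> measurable M K" and g: "g \<in> measurable M K" and h: "h \<in> measurable N K"
    and fh: "distr M K f = distr N K h" and gh: "distr M K g = distr N K h"
    and S: "S \<in> sets K" and T: "T \<in> sets K" and disj: "S \<inter> T = {}"
    and A: "A \<subseteq> f -` S \<union> g -` T"
  shows "measure M A \<le> measure N (h -` (S \<union> T) \<inter> space N)"
proof (cases "A \<in> sets M")
  case True
  have "measure M A \<le> measure M ((f -` S \<inter> space M) \<union> (g -` T \<inter> space M))"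
    using True A sets.sets_into_space[OF True] measurable_sets[OF f S] measurable_sets[OF g T]
    by (intro finite_measure.finite_measure_mono[OF M]) auto
  also have "\<dots> \<le> measure M (f -` S \<inter> space M) + measure M (g -` T \<inter> space M)"
    using measurable_sets[OF f S] measurable_sets[OF g T] by (rule measure_Un_le)
  also have "\<dots> = measure N (h -` S \<inter> space N) + measure N (h -` T \<inter> space N)"
    using measure_distr[OF f S] measure_distr[OF g T] measure_distr[OF h S] measure_distr[OF h T] fh gh
    by simp
  also have "\<dots> = measure N (h -` (S \<union> T) \<inter> space N)"
    using measurable_sets[OF h S] measurable_sets[OF h T] disj
    by (subst finite_measure.finite_measure_Union[OF N, symmetric]) (auto intro: arg_cong[where f = "measure N"])
  finally show ?thesis .
qed (simp add: measure_notin_sets)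

lemma iterated_BM_event_subset:
  fixes D :: "'a::euclidean_space set"
  assumes D: "open D" "D \<noteq> UNIV" and z: "z \<in> D" and t: "t > 0"
    and Xp: "BM M Xp" and Xm: "BM M Xm" and Y: "std_BM M Y"
  shows "{\<omega> \<in> space M. exit_time D (iterated_BM z Xp Xm Y \<omega>) > ereal t} \<subseteq>
         (\<lambda>\<omega>. (path_of Xp \<omega>, path_of Y \<omega>)) -` stay_set_pos D z t \<union>
         (\<lambda>\<omega>. (path_of Xm \<omega>, path_of Y \<omega>)) -` stay_set_neg D z t"
proof
  fix \<omega> assume "\<omega> \<in> {\<omega> \<in> space M. exit_time D (iterated_BM z Xp Xm Y \<omega>) > ereal t}"
  hence \<omega>: "\<omega> \<in> space M" and exit: "exit_time D (iterated_BM z Xp Xm Y \<omega>) > ereal t" by auto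
  have "iterated_BM z Xp Xm Y \<omega> = (\<lambda>s. z + (if 0 \<le> Y \<omega> s then Xp \<omega> (Y \<omega> s) else Xm \<omega> (- Y \<omega> s)))"
    by (simp add: fun_eq_iff iterated_BM_def)
  hence "exit_time D (\<lambda>s. z + (if 0 \<le> Y \<omega> s then Xp \<omega> (Y \<omega> s) else Xm \<omega> (- Y \<omega> s))) > ereal t"
    using exit by simp
  moreover have "z + Xm \<omega> 0 \<in> D" using z BM_path_0[OF Xm \<omega>] by simp
  ultimately have "(path_of Xp \<omega>, path_of Y \<omega>) \<in> stay_set_pos D z t \<or>
      (path_of Xm \<omega>, path_of Y \<omega>) \<in> stay_set_neg D z t"
    unfolding path_of_def
    by (intro iterated_path_in_stay_sets[OF t continuous_on_BM_path[OF Xp \<omega>] continuous_on_BM_path[OF Xm \<omega>]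
        continuous_on_std_BM_path[OF Y \<omega>] std_BM_path_0[OF Y \<omega>] D])
  thus "\<omega> \<in> (\<lambda>\<omega>. (path_of Xp \<omega>, path_of Y \<omega>)) -` stay_set_pos D z t \<union>
      (\<lambda>\<omega>. (path_of Xm \<omega>, path_of Y \<omega>)) -` stay_set_neg D z t"
    by simp
qed

lemma brownian_time_BM_event_eq:
  fixes D :: "'a::euclidean_space set"
  assumes D: "open D" "D \<noteq> UNIV" and z: "z \<in> D" and t: "t > 0"
    and X: "BM N X" and Y1: "std_BM N Y1"
  shows "{\<omega> \<in> space N. exit_time D (brownian_time_BM z X Y1 \<omega>) > ereal t} =
         (\<lambda>\<omega>. (path_of X \<omega>, path_of Y1 \<omega>)) -` (stay_set_pos D z t \<union> stay_set_neg D z t) \<inter> space N"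
proof -
  have "exit_time D (brownian_time_BM z X Y1 \<omega>) > ereal t \<longleftrightarrow>
      (path_of X \<omega>, path_of Y1 \<omega>) \<in> stay_set_pos D z t \<union> stay_set_neg D z t"
    if \<omega>: "\<omega> \<in> space N" for \<omega>
  proof -
    have "brownian_time_BM z X Y1 \<omega> = (\<lambda>s. z + X \<omega> \<bar>Y1 \<omega> s\<bar>)"
      by (simp add: fun_eq_iff brownian_time_BM_def)
    moreover have "z + X \<omega> 0 \<in> D" using z BM_path_0[OF X \<omega>] by simp
    ultimately show ?thesis
      using time_changed_path_stays_iff[OF t continuous_on_BM_path[OF X \<omega>]
          continuous_on_std_BM_path[OF Y1 \<omega>] std_BM_path_0[OF Y1 \<omega>] D]
      unfolding path_of_def by simp
  qed
  thus ?thesis by blast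
qed

lemma iterated_BM_stay_prob_le:
  fixes D :: "'a::euclidean_space set"
  assumes D: "open D" and z: "z \<in> D" and t: "t > 0"
    and Xp: "BM M Xp" and Xm: "BM M Xm" and Y: "std_BM M Y"
    and indep: "indep_rvs M (path_space \<Otimes>\<^sub>M path_space)
                  (\<lambda>\<omega>. (path_of Xp \<omega>, path_of Xm \<omega>)) path_space (path_of Y)"
    and X: "BM N X" and Y1: "std_BM N Y1"
    and indep1: "indep_rvs N path_space (path_of X) path_space (path_of Y1)"
  shows "measure M {\<omega> \<in> space M. exit_time D (iterated_BM z Xp Xm Y \<omega>) > ereal t}
         \<le> measure N {\<omega> \<in> space N. exit_time D (brownian_time_BM z X Y1 \<omega>) > ereal t}"
proof -
  interpret M: prob_space M using Y unfolding std_BM_def by auto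
  interpret N: prob_space N using Y1 unfolding std_BM_def by auto
  show ?thesis
  proof (cases "D = UNIV")
    case True
    hence "exit_time D w = \<infinity>" for w :: "real \<Rightarrow> 'a"
      unfolding exit_time_def by (simp add: top_ereal_def)
    thus ?thesis by (simp add: M.prob_space N.prob_space)
  next
    case False
    let ?pair = "\<lambda>X Y \<omega>. (path_of X \<omega>, path_of Y \<omega>)"
    have measurable:
      "?pair Xp Y \<in> measurable M (path_space \<Otimes>\<^sub>M path_space)"
      "?pair Xm Y \<in> measurable M (path_space \<Otimes>\<^sub>M path_space)"
      "?pair X Y1 \<in> measurable N (path_space \<Otimes>\<^sub>M path_space)"
      using Xp Xm Y X Y1 by (auto intro!: measurable_Pair measurable_path_of_BM measurable_path_of_std_BM)
    have laws:
      "distr M (path_space \<Otimes>\<^sub>M path_space) (?pair Xp Y) = distr N (path_space \<Otimes>\<^sub>M path_space) (?pair X Y1)"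
      "distr M (path_space \<Otimes>\<^sub>M path_space) (?pair Xm Y) = distr N (path_space \<Otimes>\<^sub>M path_space) (?pair X Y1)"
      using indep_rvs_compose_left[OF M.prob_space_axioms indep measurable_fst]
        indep_rvs_compose_left[OF M.prob_space_axioms indep measurable_snd]
      by (intro BM_pair_law_eq Xp Xm Y X Y1 indep1; simp)+
    have "stay_set_pos D z t \<inter> stay_set_neg D z t = {}"
      unfolding stay_set_pos_def stay_set_neg_def by blast
    from measure_le_of_equal_laws[OF M.finite_measure_axioms N.finite_measure_axioms measurable laws
        sets_stay_sets this iterated_BM_event_subset[OF D False z t Xp Xm Y]]
    show ?thesis unfolding brownian_time_BM_event_eq[OF D False z t X Y1] .
  qed
qed

theorem theorem1p3:
  fixes D :: "'a::euclidean_space set"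
    and M :: "'w measure" and Xp Xm :: "'w \<Rightarrow> real \<Rightarrow> 'a" and Y :: "'w \<Rightarrow> real \<Rightarrow> real"
    and N :: "'v measure" and X :: "'v \<Rightarrow> real \<Rightarrow> 'a" and Y1 :: "'v \<Rightarrow> real \<Rightarrow> real"
    and z :: 'a and t :: real
  assumes D: "open D" "connected D" "D \<noteq> {}"
    and z: "z \<in> D" and t: "t > 0"
    and Xp: "BM M Xp" and Xm: "BM M Xm" and Y: "std_BM M Y"
    and indep1: "prob_space.indep_var M path_space (path_of Xp) path_space (path_of Xm)"
    and indep2: "indep_rvs M (path_space \<Otimes>\<^sub>M path_space)
                   (\<lambda>\<omega>. (path_of Xp \<omega>, path_of Xm \<omega>)) path_space (path_of Y)"
    and X: "BM N X" and Y1: "std_BM N Y1"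
    and indep3: "indep_rvs N path_space (path_of X) path_space (path_of Y1)"
  shows "measure M {\<omega> \<in> space M. exit_time D (iterated_BM z Xp Xm Y \<omega>) > ereal t}
         \<le> 2 * measure N {\<omega> \<in> space N. exit_time D (brownian_time_BM z X Y1 \<omega>) > ereal t}"
  using iterated_BM_stay_prob_le[OF D(1) z t Xp Xm Y indep2 X Y1 indep3]
  by (rule order_trans) simp

end
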